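(* For all $u,v,w\in\mathcal{A}(D)$ we have $\langle u, v*w\rangle=\langle u*v,w\rangle$.
   Context: Let $G$ be a group generated by a conjugacy class $D$ of involutions such that for all $d,e\in D$ the order of $de$ is $1$, $2$ or $3$ ($3$-transpositions). Lines of the Fischer space on $D$ are triples $\{d,e,d^e\}$ with $d,e\in D$ non-commuting. $\mathcal{A}(D)$ is the $\mathbb{F}_2$-vector space with basis $D$ (finite subsets of $D$ under symmetric difference), with bilinear product determined by $d*e=d+e+f$ if $\{d,e,f\}$ is a line and $d*e=0$ otherwise. The bilinear form $\langle\cdot,\cdot\rangle$ on $\mathcal{A}(D)$ is determined by $\langle d,e\rangle=1$ if $d,e$ do not commute and $\langle d,e\rangle=0$ otherwise. *)

theory Defs
  imports "HOL-Algebra.Algebra"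
begin

definition conj_class :: "('a, 'b) monoid_scheme \<Rightarrow> 'a \<Rightarrow> 'a set" where
  "conj_class G x = {inv\<^bsub>G\<^esub> g \<otimes>\<^bsub>G\<^esub> x \<otimes>\<^bsub>G\<^esub> g | g. g \<in> carrier G}"

definition three_transposition_group :: "('a, 'b) monoid_scheme \<Rightarrow> 'a set \<Rightarrow> bool" where
  "three_transposition_group G D \<longleftrightarrow>
     group G \<and>
     (\<exists>a \<in> carrier G. D = conj_class G a) \<and>
     (\<forall>d \<in> D. d \<noteq> \<one>\<^bsub>G\<^esub> \<and> d \<otimes>\<^bsub>G\<^esub> d = \<one>\<^bsub>G\<^esub>) \<and>
     generate G D = carrier G \<and>
     (\<forall>d \<in> D. \<forall>e \<in> D. group.ord G (d \<otimes>\<^bsub>G\<^esub> e) \<in> {1, 2, 3})"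

(* Elements of A(D): finite subsets of D (F_2-linear combinations of basis D) *)
definition algA :: "'a set \<Rightarrow> 'a set set" where
  "algA D = {u. u \<subseteq> D \<and> finite u}"

(* product of basis elements: d*e = d+e+d^e if {d,e,d^e} is a line, 0 otherwise *)
definition basic_prod :: "('a, 'b) monoid_scheme \<Rightarrow> 'a \<Rightarrow> 'a \<Rightarrow> 'a set" where
  "basic_prod G d e =
     (if d \<otimes>\<^bsub>G\<^esub> e = e \<otimes>\<^bsub>G\<^esub> d then {}
      else {d, e, inv\<^bsub>G\<^esub> e \<otimes>\<^bsub>G\<^esub> d \<otimes>\<^bsub>G\<^esub> e})"

(* bilinear extension over F_2: x occurs in u*v iff it occurs in an odd number of d*e, d\<in>u, e\<in>v *)
definition alg_mult :: "('a, 'b) monoid_scheme \<Rightarrow> 'a set \<Rightarrow> 'a set \<Rightarrow> 'a set" where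
  "alg_mult G u v = {x. odd (card {(d, e). d \<in> u \<and> e \<in> v \<and> x \<in> basic_prod G d e})}"

(* bilinear form with values in F_2 = bool (True = 1): parity of the number of non-commuting pairs *)
definition alg_form :: "('a, 'b) monoid_scheme \<Rightarrow> 'a set \<Rightarrow> 'a set \<Rightarrow> bool" where
  "alg_form G u v = odd (card {(d, e). d \<in> u \<and> e \<in> v \<and> d \<otimes>\<^bsub>G\<^esub> e \<noteq> e \<otimes>\<^bsub>G\<^esub> d})"

end

theory Submission
  imports Defs
begin

text \<open>
  Over \<open>\<FF>\<^sub>2\<close> both sides are trilinear and the form is symmetric, so modulo 2 each side is
  a sum over basis triples \<open>(d, e, f)\<close>: the left side counts the points of the line
  \<open>e * f\<close> not commuting with \<open>d\<close>, the right side the points of \<open>d * e\<close> not commuting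
  with \<open>f\<close>. For 3-transpositions \<open>e f e = f e f\<close> whenever \<open>e, f\<close> do not commute, and a
  case analysis on which of \<open>d, e, f\<close> commute shows the two counts have equal parity.
\<close>

lemma (in group) inv_eq_self_of_involution:
  "e \<in> carrier G \<Longrightarrow> e \<otimes> e = \<one> \<Longrightarrow> inv e = e"
  by (rule inv_equality)

lemma (in group) braid_of_ord_le_3:
  assumes e: "e \<in> carrier G" and f: "f \<in> carrier G"
    and ee: "e \<otimes> e = \<one>" and ff: "f \<otimes> f = \<one>"
    and ord: "ord (e \<otimes> f) \<in> {1, 2, 3}" and nc: "e \<otimes> f \<noteq> f \<otimes> e"
  shows "e \<otimes> f \<otimes> e = f \<otimes> e \<otimes> f"
proof -
  have pow_ord: "(e \<otimes> f) [^] ord (e \<otimes> f) = \<one>" using e f by simp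
  have inv_ef: "inv (e \<otimes> f) = f \<otimes> e"
    using e f ee ff by (simp add: inv_mult_group inv_eq_self_of_involution)
  have "ord (e \<otimes> f) \<noteq> 1"
  proof
    assume "ord (e \<otimes> f) = 1"
    with pow_ord have "e \<otimes> f = \<one>" using e f by simp
    hence "inv (e \<otimes> f) = e \<otimes> f" by simp
    with inv_ef nc show False by simp
  qed
  moreover have "ord (e \<otimes> f) \<noteq> 2"
  proof
    assume "ord (e \<otimes> f) = 2"
    with pow_ord have "(e \<otimes> f) \<otimes> (e \<otimes> f) = \<one>" using e f by (simp add: numeral_2_eq_2)
    hence "inv (e \<otimes> f) = e \<otimes> f" using e f by (simp add: inv_equality)
    with inv_ef nc show False by simp
  qed
  ultimately have "ord (e \<otimes> f) = 3" using ord by auto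
  with pow_ord have "(e \<otimes> f \<otimes> e) \<otimes> (f \<otimes> e \<otimes> f) = \<one>"
    using e f by (simp add: numeral_3_eq_3 m_assoc)
  hence "e \<otimes> f \<otimes> e = inv (f \<otimes> e \<otimes> f)" using e f by (simp add: inv_equality)
  also have "\<dots> = f \<otimes> e \<otimes> f"
    using e f ee ff by (simp add: inv_mult_group inv_eq_self_of_involution m_assoc)
  finally show ?thesis .
qed

lemma (in group) involution_conj_commute_iff:
  assumes e: "e \<in> carrier G" and ee: "e \<otimes> e = \<one>" and a: "a \<in> carrier G" and b: "b \<in> carrier G"
  shows "(e \<otimes> a \<otimes> e) \<otimes> (e \<otimes> b \<otimes> e) = (e \<otimes> b \<otimes> e) \<otimes> (e \<otimes> a \<otimes> e) \<longleftrightarrow> a \<otimes> b = b \<otimes> a"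
proof -
  have conj_mult: "(e \<otimes> x \<otimes> e) \<otimes> (e \<otimes> y \<otimes> e) = e \<otimes> (x \<otimes> y) \<otimes> e"
    if "x \<in> carrier G" "y \<in> carrier G" for x y
    using that e ee by (simp add: m_assoc flip: m_assoc[of e e])
  show ?thesis using a b e by (simp add: conj_mult)
qed

lemma (in group) line_distinct:
  assumes e: "e \<in> carrier G" and f: "f \<in> carrier G" and ff: "f \<otimes> f = \<one>"
    and nc: "e \<otimes> f \<noteq> f \<otimes> e"
  shows "e \<noteq> f" "e \<noteq> f \<otimes> e \<otimes> f" "f \<noteq> f \<otimes> e \<otimes> f"
proof -
  show "e \<noteq> f" using nc by auto
  show "e \<noteq> f \<otimes> e \<otimes> f"
  proof
    assume "e = f \<otimes> e \<otimes> f"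
    hence "f \<otimes> e = f \<otimes> f \<otimes> e \<otimes> f" using e f by (simp add: m_assoc)
    with e f ff nc show False by simp
  qed
  show "f \<noteq> f \<otimes> e \<otimes> f"
  proof
    assume "f = f \<otimes> e \<otimes> f"
    hence "f \<otimes> f = f \<otimes> (f \<otimes> e) \<otimes> f" using e f by (simp add: m_assoc)
    hence "\<one> = e \<otimes> f" using e f ff by (simp flip: m_assoc)
    hence "e = f" using e f ff by (metis inv_equality)
    with nc show False by simp
  qed
qed

lemma card_filter_three:
  assumes "a \<noteq> b" "a \<noteq> c" "b \<noteq> c"
  shows "card {x \<in> {a, b, c}. P x} = of_bool (P a) + of_bool (P b) + of_bool (P c)"
proof -
  have "{x \<in> {a, b, c}. P x}
      = (if P a then {a} else {}) \<union> (if P b then {b} else {}) \<union> (if P c then {c} else {})"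
    by auto
  with assms show ?thesis by (cases "P a"; cases "P b"; cases "P c") simp_all
qed

lemma (in group) basic_prod_noncommuting:
  assumes "f \<in> carrier G" "f \<otimes> f = \<one>" "e \<otimes> f \<noteq> f \<otimes> e"
  shows "basic_prod G e f = {e, f, f \<otimes> e \<otimes> f}"
  using assms by (simp add: basic_prod_def inv_eq_self_of_involution)

lemma basic_prod_commuting:
  "e \<otimes>\<^bsub>G\<^esub> f = f \<otimes>\<^bsub>G\<^esub> e \<Longrightarrow> basic_prod G e f = {}"
  by (simp add: basic_prod_def)

lemma (in group) card_noncommuting_line_mod_2:
  assumes d: "d \<in> carrier G" and e: "e \<in> carrier G" and f: "f \<in> carrier G"
    and ee: "e \<otimes> e = \<one>" and ff: "f \<otimes> f = \<one>"
    and braid_de: "d \<otimes> e \<noteq> e \<otimes> d \<Longrightarrow> d \<otimes> e \<otimes> d = e \<otimes> d \<otimes> e"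
    and braid_ef: "e \<otimes> f \<noteq> f \<otimes> e \<Longrightarrow> e \<otimes> f \<otimes> e = f \<otimes> e \<otimes> f"
  shows "card {x \<in> basic_prod G e f. d \<otimes> x \<noteq> x \<otimes> d} mod 2
       = card {x \<in> basic_prod G d e. f \<otimes> x \<noteq> x \<otimes> f} mod 2"
proof -
  define DE where "DE \<longleftrightarrow> d \<otimes> e \<noteq> e \<otimes> d"
  define EF where "EF \<longleftrightarrow> e \<otimes> f \<noteq> f \<otimes> e"
  define DF where "DF \<longleftrightarrow> d \<otimes> f \<noteq> f \<otimes> d"
  \<comment> \<open>\<open>Q\<close> is counted on both sides: as \<open>d\<close> against \<open>f\<^sup>e = e\<^sup>f\<close> and as \<open>d\<^sup>e\<close> against \<open>f\<close>, which agree by conjugating with \<open>e\<close>.\<close>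
  define Q where "Q \<longleftrightarrow> (e \<otimes> d \<otimes> e) \<otimes> f \<noteq> f \<otimes> (e \<otimes> d \<otimes> e)"
  have efe: "e \<otimes> f \<otimes> e \<in> carrier G" using d e f by auto
  have "e \<otimes> (e \<otimes> f \<otimes> e) \<otimes> e = f" using e f ee by (simp add: m_assoc flip: m_assoc[of e e])
  then have Q_conj: "Q \<longleftrightarrow> d \<otimes> (e \<otimes> f \<otimes> e) \<noteq> (e \<otimes> f \<otimes> e) \<otimes> d"
    using involution_conj_commute_iff[OF e ee d efe] by (simp add: Q_def)
  have Q_if_commuting: "Q \<longleftrightarrow> DF" if "\<not> DE \<or> \<not> EF"
  proof -
    have "e \<otimes> d \<otimes> e = d \<or> e \<otimes> f \<otimes> e = f"
      using that d e f ee unfolding DE_def EF_def by (metis l_one m_assoc r_one)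
    then show ?thesis using Q_conj unfolding Q_def DF_def by auto
  qed
  have left: "card {x \<in> basic_prod G e f. d \<otimes> x \<noteq> x \<otimes> d}
      = (if EF then of_bool DE + of_bool DF + of_bool Q else 0)"
  proof (cases EF)
    case True
    then have nc: "e \<otimes> f \<noteq> f \<otimes> e" by (simp add: EF_def)
    have "d \<otimes> (f \<otimes> e \<otimes> f) \<noteq> (f \<otimes> e \<otimes> f) \<otimes> d \<longleftrightarrow> Q"
      using Q_conj braid_ef[OF nc] by simp
    then show ?thesis
      unfolding basic_prod_noncommuting[OF f ff nc] card_filter_three[OF line_distinct[OF e f ff nc]]
      using True by (simp add: DE_def DF_def)
  qed (simp add: EF_def basic_prod_commuting)
  have right: "card {x \<in> basic_prod G d e. f \<otimes> x \<noteq> x \<otimes> f}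
      = (if DE then of_bool DF + of_bool EF + of_bool Q else 0)"
  proof (cases DE)
    case True
    then have nc: "d \<otimes> e \<noteq> e \<otimes> d" by (simp add: DE_def)
    have "f \<otimes> d \<noteq> d \<otimes> f \<longleftrightarrow> DF" "f \<otimes> e \<noteq> e \<otimes> f \<longleftrightarrow> EF"
      "f \<otimes> (e \<otimes> d \<otimes> e) \<noteq> (e \<otimes> d \<otimes> e) \<otimes> f \<longleftrightarrow> Q"
      by (auto simp: DF_def EF_def Q_def)
    then show ?thesis
      unfolding basic_prod_noncommuting[OF e ee nc] card_filter_three[OF line_distinct[OF d e ee nc]]
      using True by simp
  qed (simp add: DE_def basic_prod_commuting)
  show ?thesis
    unfolding left right using Q_if_commuting by (cases DE; cases EF; cases DF; cases Q) simp_all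
qed

lemma sum_mod_cong:
  fixes f g :: "'a \<Rightarrow> 'b::euclidean_semiring_cancel"
  assumes "\<And>x. x \<in> A \<Longrightarrow> f x mod m = g x mod m"
  shows "sum f A mod m = sum g A mod m"
  using assms by (metis (mono_tags, lifting) mod_sum_eq sum.cong)

lemma card_filter_eq_sum: "finite A \<Longrightarrow> card {x \<in> A. P x} = (\<Sum>x\<in>A. of_bool (P x))"
  by (simp add: Int_def)

lemma odd_cover_subset_Union: "{x. odd (card {t \<in> T. x \<in> B t})} \<subseteq> \<Union> (B ` T)"
proof
  fix x assume "x \<in> {x. odd (card {t \<in> T. x \<in> B t})}"
  then have "{t \<in> T. x \<in> B t} \<noteq> {}" by (metis (no_types) card.empty even_zero mem_Collect_eq)
  then show "x \<in> \<Union> (B ` T)" by blast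
qed

lemma finite_odd_cover:
  "finite T \<Longrightarrow> (\<And>t. t \<in> T \<Longrightarrow> finite (B t)) \<Longrightarrow> finite {x. odd (card {t \<in> T. x \<in> B t})}"
  by (rule finite_subset[OF odd_cover_subset_Union]) simp

lemma card_odd_cover_mod_2:
  assumes T: "finite T" and B: "\<And>t. t \<in> T \<Longrightarrow> finite (B t)"
  shows "card {x. odd (card {t \<in> T. x \<in> B t}) \<and> P x} mod 2 = (\<Sum>t\<in>T. card {x \<in> B t. P x}) mod 2"
proof -
  define U where "U = \<Union> (B ` T)"
  define N where "N x = card {t \<in> T. x \<in> B t}" for x
  have U: "finite U" using T B by (simp add: U_def)
  have "(\<Sum>t\<in>T. card {x \<in> B t. P x}) = (\<Sum>t\<in>T. \<Sum>x\<in>U. of_bool (x \<in> B t \<and> P x))"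
  proof (rule sum.cong)
    fix t assume "t \<in> T"
    then have "{x \<in> B t. P x} = {x \<in> U. x \<in> B t \<and> P x}" by (auto simp: U_def)
    then show "card {x \<in> B t. P x} = (\<Sum>x\<in>U. of_bool (x \<in> B t \<and> P x))"
      by (simp add: card_filter_eq_sum[OF U])
  qed simp
  also have "\<dots> = (\<Sum>x\<in>U. \<Sum>t\<in>T. of_bool (x \<in> B t \<and> P x))" by (rule sum.swap)
  also have "\<dots> = (\<Sum>x\<in>U. of_bool (P x) * N x)"
    by (rule sum.cong) (auto simp: N_def card_filter_eq_sum[OF T])
  finally have "(\<Sum>t\<in>T. card {x \<in> B t. P x}) mod 2 = (\<Sum>x\<in>U. of_bool (P x) * N x) mod 2" by simp
  also have "\<dots> = (\<Sum>x\<in>U. of_bool (odd (N x) \<and> P x)) mod 2"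
    by (rule sum_mod_cong) (auto simp: mod2_eq_if)
  also have "(\<Sum>x\<in>U. of_bool (odd (N x) \<and> P x)) = card {x \<in> U. odd (N x) \<and> P x}"
    by (simp add: card_filter_eq_sum[OF U])
  also have "{x \<in> U. odd (N x) \<and> P x} = {x. odd (N x) \<and> P x}"
    using odd_cover_subset_Union[of T B] unfolding U_def N_def by blast
  finally show ?thesis by (simp add: N_def)
qed

lemma alg_mult_eq_odd_cover:
  "alg_mult G u v = {x. odd (card {p \<in> u \<times> v. x \<in> case_prod (basic_prod G) p})}"
proof -
  have "{(d, e). d \<in> u \<and> e \<in> v \<and> x \<in> basic_prod G d e} = {p \<in> u \<times> v. x \<in> case_prod (basic_prod G) p}"
    for x by auto
  then show ?thesis by (simp add: alg_mult_def)
qed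

lemma finite_basic_prod: "finite (basic_prod G d e)"
  by (simp add: basic_prod_def)

lemma alg_form_commute: "alg_form G u v = alg_form G v u"
proof -
  have "{(e, d). e \<in> v \<and> d \<in> u \<and> e \<otimes>\<^bsub>G\<^esub> d \<noteq> d \<otimes>\<^bsub>G\<^esub> e}
      = prod.swap ` {(d, e). d \<in> u \<and> e \<in> v \<and> d \<otimes>\<^bsub>G\<^esub> e \<noteq> e \<otimes>\<^bsub>G\<^esub> d}"
    by auto
  then show ?thesis by (simp add: alg_form_def card_image)
qed

lemma alg_form_eq_odd_sum:
  assumes "finite u" "finite v"
  shows "alg_form G u v \<longleftrightarrow> odd (\<Sum>d\<in>u. card {x \<in> v. d \<otimes>\<^bsub>G\<^esub> x \<noteq> x \<otimes>\<^bsub>G\<^esub> d})"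
proof -
  have "{(d, x). d \<in> u \<and> x \<in> v \<and> d \<otimes>\<^bsub>G\<^esub> x \<noteq> x \<otimes>\<^bsub>G\<^esub> d}
      = Sigma u (\<lambda>d. {x \<in> v. d \<otimes>\<^bsub>G\<^esub> x \<noteq> x \<otimes>\<^bsub>G\<^esub> d})"
    by auto
  with assms show ?thesis by (simp add: alg_form_def)
qed

lemma alg_form_alg_mult_eq_odd_sum:
  assumes u: "finite u" and v: "finite v" and w: "finite w"
  shows "alg_form G u (alg_mult G v w) \<longleftrightarrow>
    odd (\<Sum>d\<in>u. \<Sum>e\<in>v. \<Sum>f\<in>w. card {x \<in> basic_prod G e f. d \<otimes>\<^bsub>G\<^esub> x \<noteq> x \<otimes>\<^bsub>G\<^esub> d})"
proof -
  have vw: "finite (v \<times> w)" using v w by simp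
  have "finite (alg_mult G v w)"
    unfolding alg_mult_eq_odd_cover by (rule finite_odd_cover[OF vw]) (auto simp: finite_basic_prod)
  then have "alg_form G u (alg_mult G v w) \<longleftrightarrow>
      odd (\<Sum>d\<in>u. card {x \<in> alg_mult G v w. d \<otimes>\<^bsub>G\<^esub> x \<noteq> x \<otimes>\<^bsub>G\<^esub> d})"
    using u by (simp add: alg_form_eq_odd_sum)
  also have "(\<Sum>d\<in>u. card {x \<in> alg_mult G v w. d \<otimes>\<^bsub>G\<^esub> x \<noteq> x \<otimes>\<^bsub>G\<^esub> d}) mod 2
      = (\<Sum>d\<in>u. \<Sum>(e, f)\<in>v \<times> w. card {x \<in> basic_prod G e f. d \<otimes>\<^bsub>G\<^esub> x \<noteq> x \<otimes>\<^bsub>G\<^esub> d}) mod 2"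
    using card_odd_cover_mod_2[OF vw, of "case_prod (basic_prod G)"]
    by (intro sum_mod_cong) (simp add: alg_mult_eq_odd_cover finite_basic_prod case_prod_beta)
  then have "odd (\<Sum>d\<in>u. card {x \<in> alg_mult G v w. d \<otimes>\<^bsub>G\<^esub> x \<noteq> x \<otimes>\<^bsub>G\<^esub> d})
      \<longleftrightarrow> odd (\<Sum>d\<in>u. \<Sum>(e, f)\<in>v \<times> w. card {x \<in> basic_prod G e f. d \<otimes>\<^bsub>G\<^esub> x \<noteq> x \<otimes>\<^bsub>G\<^esub> d})"
    by (simp add: even_iff_mod_2_eq_zero)
  finally show ?thesis by (simp add: sum.cartesian_product)
qed

lemma three_transposition_group_card_line_mod_2:
  fixes G (structure)
  assumes G: "three_transposition_group G D" and d: "d \<in> D" and e: "e \<in> D" and f: "f \<in> D"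
  shows "card {x \<in> basic_prod G e f. d \<otimes> x \<noteq> x \<otimes> d} mod 2
       = card {x \<in> basic_prod G d e. f \<otimes> x \<noteq> x \<otimes> f} mod 2"
proof -
  interpret group G using G by (simp add: three_transposition_group_def)
  have D: "D \<subseteq> carrier G"
    using G by (auto simp: three_transposition_group_def conj_class_def)
  have invol: "x \<otimes> x = \<one>" if "x \<in> D" for x
    using G that by (simp add: three_transposition_group_def)
  have braid: "x \<otimes> y \<otimes> x = y \<otimes> x \<otimes> y" if "x \<in> D" "y \<in> D" "x \<otimes> y \<noteq> y \<otimes> x" for x y
    using G that D invol by (intro braid_of_ord_le_3) (auto simp: three_transposition_group_def)
  show ?thesis
    using d e f D invol braid by (intro card_noncommuting_line_mod_2) auto
qed

theorem proposition2p1: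
  fixes G :: "('a, 'b) monoid_scheme" and D :: "'a set"
  assumes "three_transposition_group G D"
    and "u \<in> algA D" and "v \<in> algA D" and "w \<in> algA D"
  shows "alg_form G u (alg_mult G v w) = alg_form G (alg_mult G u v) w"
proof -
  have fin: "finite u" "finite v" "finite w" and sub: "u \<subseteq> D" "v \<subseteq> D" "w \<subseteq> D"
    using assms(2-4) by (auto simp: algA_def)
  have "(\<Sum>d\<in>u. \<Sum>e\<in>v. \<Sum>f\<in>w. card {x \<in> basic_prod G e f. d \<otimes>\<^bsub>G\<^esub> x \<noteq> x \<otimes>\<^bsub>G\<^esub> d}) mod 2
      = (\<Sum>d\<in>u. \<Sum>e\<in>v. \<Sum>f\<in>w. card {x \<in> basic_prod G d e. f \<otimes>\<^bsub>G\<^esub> x \<noteq> x \<otimes>\<^bsub>G\<^esub> f}) mod 2"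
    using sub by (intro sum_mod_cong three_transposition_group_card_line_mod_2[OF assms(1)]) auto
  also have "(\<Sum>d\<in>u. \<Sum>e\<in>v. \<Sum>f\<in>w. card {x \<in> basic_prod G d e. f \<otimes>\<^bsub>G\<^esub> x \<noteq> x \<otimes>\<^bsub>G\<^esub> f})
      = (\<Sum>f\<in>w. \<Sum>d\<in>u. \<Sum>e\<in>v. card {x \<in> basic_prod G d e. f \<otimes>\<^bsub>G\<^esub> x \<noteq> x \<otimes>\<^bsub>G\<^esub> f})"
    by (simp add: sum.swap[of _ w] sum.swap[of _ w v])
  finally have "alg_form G u (alg_mult G v w) \<longleftrightarrow> alg_form G w (alg_mult G u v)"
    using fin by (simp add: alg_form_alg_mult_eq_odd_sum even_iff_mod_2_eq_zero)
  then show ?thesis by (simp add: alg_form_commute)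
qed

end
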